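(* Let $X=\{1,\dots,n\}$, let $\phi:X\leadsto X$ be a set-valued map which is a surjection (every $j\in X$ belongs to $\phi(i)$ for some $i$), let $T\in\mathbb{N}$ and $I=\{0,1,\dots,T\}$. Let $g:X\to\mathbb{R}$ and $g_0=B_1^T(g)$. Let $U:I\times X\to\mathbb{R}$ be given by $U(k,x_k)=\min\{g_0(x(0))\mid x\in S_\phi(k,x_k)\}$, set $g_T=U(T,\cdot)$, and let $W:I\times X\to\mathbb{R}$ be given by $W(k,x_k)=\max\{g_T(x(T))\mid x\in S_\phi(k,x_k)\}$. Then $U(0,\cdot)=W(0,\cdot)$.
   Context: A trajectory is a map $x:I\to X$ with $x(i+1)\in\phi(x(i))$ for $i=0,\dots,T-1$; $S_\phi(k,x_k)$ is the set of trajectories with $x(k)=x_k$. For $h:X\to\mathbb{R}$, the backward one-step operator is $B_1(h)(i)=\max\{h(j)\mid j\in\phi(i)\}$, and $B_1^T$ is its $T$-fold iterate. *)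

theory Defs
  imports "HOL-Library.FuncSet" Complex_Main
begin

definition trajectories :: "nat \<Rightarrow> (nat \<Rightarrow> nat set) \<Rightarrow> nat \<Rightarrow> (nat \<Rightarrow> nat) set" where
  "trajectories n phi T =
     {x \<in> {0..T} \<rightarrow>\<^sub>E {1..n}. \<forall>i<T. x (Suc i) \<in> phi (x i)}"

definition S_phi :: "nat \<Rightarrow> (nat \<Rightarrow> nat set) \<Rightarrow> nat \<Rightarrow> nat \<Rightarrow> nat \<Rightarrow> (nat \<Rightarrow> nat) set" where
  "S_phi n phi T k xk = {x \<in> trajectories n phi T. x k = xk}"

definition B1 :: "(nat \<Rightarrow> nat set) \<Rightarrow> (nat \<Rightarrow> real) \<Rightarrow> nat \<Rightarrow> real" where
  "B1 phi h i = Max (h ` phi i)"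

end

theory Submission
  imports Defs
begin

text \<open>Iterating the backward operator computes the best terminal payoff along paths:
  for every path \<open>y\<close> of length \<open>m\<close>, \<open>g (y m) \<le> (B1 \<phi> ^^ m) g (y 0)\<close>, with equality for a
  path that follows a maximiser of \<open>B1\<close> at each step. Hence, if a trajectory \<open>x\<close> starting
  at \<open>x\<^sub>0\<close> attains \<open>g\<^sub>0 x\<^sub>0 = g (x T)\<close>, every trajectory ending at \<open>x T\<close> starts in a state
  whose \<open>g\<^sub>0\<close>-value is at least \<open>g (x T)\<close>, so \<open>g\<^sub>T (x T) = g\<^sub>0 x\<^sub>0\<close>; conversely
  \<open>g\<^sub>T (z T) \<le> g\<^sub>0 (z 0)\<close> for every trajectory \<open>z\<close>. Thus \<open>W 0 x\<^sub>0 = g\<^sub>0 x\<^sub>0 = U 0 x\<^sub>0\<close>.\<close>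

lemma B1_funpow_ge_path_end:
  assumes "\<forall>j<m. finite (phi (y j))" and "\<forall>j<m. y (Suc j) \<in> phi (y j)"
  shows "g (y m) \<le> (B1 phi ^^ m) g (y 0)"
  using assms
proof (induction m arbitrary: y)
  case 0
  then show ?case by simp
next
  case (Suc m)
  have "g (y (Suc m)) \<le> (B1 phi ^^ m) g (y 1)"
    using Suc.IH[of "\<lambda>j. y (Suc j)"] Suc.prems by simp
  also have "\<dots> \<le> Max ((B1 phi ^^ m) g ` phi (y 0))"
    using Suc.prems by (intro Max_ge) auto
  also have "\<dots> = (B1 phi ^^ Suc m) g (y 0)"
    by (simp add: B1_def)
  finally show ?case .
qed

lemma B1_funpow_attained_by_path:
  assumes "\<forall>i\<in>X. phi i \<subseteq> X" and "\<forall>i\<in>X. finite (phi i) \<and> phi i \<noteq> {}" and "i \<in> X"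
  shows "\<exists>y. y 0 = i \<and> (\<forall>j\<le>m. y j \<in> X) \<and> (\<forall>j<m. y (Suc j) \<in> phi (y j))
               \<and> (B1 phi ^^ m) g i = g (y m)"
  using \<open>i \<in> X\<close>
proof (induction m arbitrary: i)
  case 0
  then show ?case by (intro exI[of _ "\<lambda>_. i"]) simp
next
  case (Suc m)
  let ?h = "(B1 phi ^^ m) g"
  have "Max (?h ` phi i) \<in> ?h ` phi i"
    using assms(2) Suc.prems by (intro Max_in) auto
  then obtain j where j: "j \<in> phi i" "(B1 phi ^^ Suc m) g i = ?h j"
    by (auto simp: B1_def)
  with assms(1) Suc.prems have "j \<in> X" by blast
  then obtain y where y: "y 0 = j" "\<forall>k\<le>m. y k \<in> X" "\<forall>k<m. y (Suc k) \<in> phi (y k)"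
    "?h j = g (y m)"
    using Suc.IH by blast
  let ?y = "\<lambda>k. case k of 0 \<Rightarrow> i | Suc k \<Rightarrow> y k"
  have "\<forall>k\<le>Suc m. ?y k \<in> X"
    using y(2) Suc.prems by (auto split: nat.split)
  moreover have "\<forall>k<Suc m. ?y (Suc k) \<in> phi (?y k)"
    using y(1,3) j(1) by (auto split: nat.split)
  ultimately show ?case
    using j(2) y(4) by (intro exI[of _ ?y]) simp
qed

lemma trajectory_in_states:
  assumes "x \<in> trajectories n phi T" and "k \<le> T"
  shows "x k \<in> {1..n}"
  using assms by (auto simp: trajectories_def)

lemma finite_S_phi: "finite (S_phi n phi T k xk)"
proof (rule finite_subset)
  show "S_phi n phi T k xk \<subseteq> {0..T} \<rightarrow>\<^sub>E {1..n}"
    by (auto simp: S_phi_def trajectories_def)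
qed (simp add: finite_PiE)

lemma trajectory_end_le_B1_funpow:
  assumes "\<forall>i\<in>{1..n}. phi i \<subseteq> {1..n}" and "x \<in> trajectories n phi T"
  shows "g (x T) \<le> (B1 phi ^^ T) g (x 0)"
proof (rule B1_funpow_ge_path_end)
  show "\<forall>j<T. finite (phi (x j))"
    using assms by (meson finite_atLeastAtMost finite_subset less_imp_le trajectory_in_states)
  show "\<forall>j<T. x (Suc j) \<in> phi (x j)"
    using assms(2) by (simp add: trajectories_def)
qed

lemma optimal_trajectory_exists:
  assumes "\<forall>i\<in>{1..n}. phi i \<subseteq> {1..n}" and "\<forall>i\<in>{1..n}. phi i \<noteq> {}" and "x0 \<in> {1..n}"
  obtains x where "x \<in> S_phi n phi T 0 x0" and "(B1 phi ^^ T) g x0 = g (x T)"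
proof -
  have "\<forall>i\<in>{1..n}. finite (phi i) \<and> phi i \<noteq> {}"
    using assms(1,2) by (meson finite_atLeastAtMost finite_subset)
  then obtain y where y: "y 0 = x0" "\<forall>j\<le>T. y j \<in> {1..n}" "\<forall>j<T. y (Suc j) \<in> phi (y j)"
    "(B1 phi ^^ T) g x0 = g (y T)"
    using B1_funpow_attained_by_path[OF assms(1) _ assms(3)] by blast
  then have "restrict y {0..T} \<in> S_phi n phi T 0 x0"
    by (auto simp: S_phi_def trajectories_def)
  with y(4) show thesis
    by (intro that[of "restrict y {0..T}"]) auto
qed

lemma Min_image_S_phi_at:
  assumes "x \<in> S_phi n phi T k xk"
  shows "Min ((\<lambda>z. f (z k)) ` S_phi n phi T k xk) = f xk"
proof -
  have "(\<lambda>z. f (z k)) ` S_phi n phi T k xk = {f xk}"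
    using assms by (auto simp: S_phi_def)
  then show ?thesis by simp
qed

lemma trajectory_end_le_Min_start_values:
  assumes "\<forall>i\<in>{1..n}. phi i \<subseteq> {1..n}" and "x \<in> trajectories n phi T"
  shows "g (x T) \<le> Min ((\<lambda>z. (B1 phi ^^ T) g (z 0)) ` S_phi n phi T T (x T))"
proof (subst Min_ge_iff)
  show "finite ((\<lambda>z. (B1 phi ^^ T) g (z 0)) ` S_phi n phi T T (x T))"
    by (simp add: finite_S_phi)
  show "(\<lambda>z. (B1 phi ^^ T) g (z 0)) ` S_phi n phi T T (x T) \<noteq> {}"
    using assms(2) by (auto simp: S_phi_def)
  show "\<forall>a\<in>(\<lambda>z. (B1 phi ^^ T) g (z 0)) ` S_phi n phi T T (x T). g (x T) \<le> a"
    using trajectory_end_le_B1_funpow[OF assms(1)] by (fastforce simp: S_phi_def)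
qed

theorem proposition5p1:
  fixes n T :: nat and phi :: "nat \<Rightarrow> nat set" and g :: "nat \<Rightarrow> real"
    and g0 gT :: "nat \<Rightarrow> real" and U W :: "nat \<Rightarrow> nat \<Rightarrow> real"
  assumes phi_into: "\<forall>i\<in>{1..n}. phi i \<subseteq> {1..n}"
    and phi_nonempty: "\<forall>i\<in>{1..n}. phi i \<noteq> {}"
    and phi_surj: "\<forall>j\<in>{1..n}. \<exists>i\<in>{1..n}. j \<in> phi i"
    and g0_def: "g0 = (B1 phi ^^ T) g"
    and U_def: "\<forall>k\<in>{0..T}. \<forall>xk\<in>{1..n}.
                  U k xk = Min ((\<lambda>x. g0 (x 0)) ` S_phi n phi T k xk)"
    and gT_def: "\<forall>xk\<in>{1..n}. gT xk = U T xk"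
    and W_def: "\<forall>k\<in>{0..T}. \<forall>xk\<in>{1..n}.
                  W k xk = Max ((\<lambda>x. gT (x T)) ` S_phi n phi T k xk)"
  shows "\<forall>xk\<in>{1..n}. U 0 xk = W 0 xk"
proof
  fix x0 assume x0: "x0 \<in> {1..n}"
  obtain x where x: "x \<in> S_phi n phi T 0 x0" and x_opt: "g0 x0 = g (x T)"
    using optimal_trajectory_exists[OF phi_into phi_nonempty x0] g0_def by metis
  have x_traj: "x \<in> trajectories n phi T"
    using x by (simp add: S_phi_def)
  have U0: "U 0 x0 = g0 x0"
    using U_def x0 Min_image_S_phi_at[OF x] by simp
  have gT_le: "gT (z T) \<le> g0 x0" if "z \<in> S_phi n phi T 0 x0" for z
  proof -
    have "z \<in> S_phi n phi T T (z T)" and "z T \<in> {1..n}" and "z 0 = x0"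
      using that trajectory_in_states[of z n phi T T] by (auto simp: S_phi_def)
    moreover from this(1) have "Min ((\<lambda>y. g0 (y 0)) ` S_phi n phi T T (z T)) \<le> g0 (z 0)"
      by (intro Min_le) (simp_all add: finite_S_phi)
    ultimately show ?thesis
      using gT_def U_def by simp
  qed
  have "g0 x0 \<le> gT (x T)"
    using trajectory_end_le_Min_start_values[OF phi_into x_traj] x_opt g0_def
      U_def gT_def trajectory_in_states[OF x_traj] by simp
  with gT_le[OF x] have "gT (x T) = g0 x0"
    by linarith
  then have "Max ((\<lambda>z. gT (z T)) ` S_phi n phi T 0 x0) = g0 x0"
    using x finite_S_phi gT_le by (intro Max_eqI) (auto intro: rev_image_eqI)
  with U0 show "U 0 x0 = W 0 x0"
    using W_def x0 by simp
qed

end
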